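(* Fix an integer $n\ge 2$, and assume that for every choice of positive integers $v_1,\ldots,v_n$ one has either $\mathrm{ML}(v_1,\ldots,v_n)=\frac{s}{ns+1}$ for some $s\in\mathbb{N}$ or $\mathrm{ML}(v_1,\ldots,v_n)\ge \frac1n$. Then for all positive integers $w_1,\ldots,w_{n-1}$ one has $\mathrm{ML}(w_1,\ldots,w_{n-1})\ge \frac1n$.
   Context: For a real number $x$, $\Vert x\Vert$ denotes the distance from $x$ to the nearest integer. For positive integers $v_1,\ldots,v_k$, the maximum loneliness is $\mathrm{ML}(v_1,\ldots,v_k)=\max_{t\in\mathbb{R}}\min_{1\le i\le k}\Vert t v_i\Vert$. Here $\mathbb{N}=\{1,2,3,\ldots\}$. *)

theory Defs
  imports "HOL-Analysis.Analysis"
begin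

definition dist_int :: "real \<Rightarrow> real" where
  "dist_int x = (INF m::int. \<bar>x - real_of_int m\<bar>)"

text \<open>Maximum loneliness of positive integers v 1, ..., v k (indices 1..k).
  (Written maxlone.) The maximum over t is attained; we write it as a supremum.\<close>
definition maxlone :: "nat \<Rightarrow> (nat \<Rightarrow> nat) \<Rightarrow> real" where
  "maxlone k v = (SUP t::real. (MIN i\<in>{1..k}. dist_int (t * real (v i))))"

end

theory Submission
  imports Defs
begin

text \<open>
  Suppose some speeds \<open>w\<^sub>1, \<dots>, w\<^sub>n\<^sub>-\<^sub>1\<close> had \<open>\<delta> = ML(w) < 1/n\<close>. Repeating the speed \<open>w\<^sub>1\<close>
  does not change the maximum loneliness, so the hypothesis forces \<open>\<delta> = s\<^sub>0/q\<close> with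
  \<open>q = n s\<^sub>0 + 1\<close>. Now adjoin a huge speed \<open>K\<close> that is a multiple of every \<open>q w\<^sub>i\<close>. Where
  \<open>\<delta>\<close> is attained, some \<open>t w\<^sub>i\<close> lies in \<open>(1/q)\<int>\<close>, so \<open>t K \<in> \<int>\<close> and the new runner is
  not lonely there: \<open>ML(w, K) < \<delta>\<close>. On the other hand, within \<open>1/K\<close> of a maximiser of
  \<open>w\<close> there is a time at which the new runner is at distance \<open>1/2\<close>, so
  \<open>ML(w, K) \<ge> \<delta> - (\<Sum> w\<^sub>i)/K\<close>. The hypothesis makes \<open>ML(w, K)\<close> a value \<open>s/(n s + 1)\<close> below
  \<open>s\<^sub>0/q\<close>, and such values stay at least \<open>1/q\<^sup>2\<close> below it: a contradiction for large \<open>K\<close>.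
\<close>

lemma dist_int_eq_round: "dist_int x = \<bar>x - of_int (round x)\<bar>"
  unfolding dist_int_def
proof (rule antisym)
  show "(INF m::int. \<bar>x - real_of_int m\<bar>) \<le> \<bar>x - of_int (round x)\<bar>"
    by (rule cINF_lower) (auto intro: bdd_belowI[of _ 0])
  show "\<bar>x - of_int (round x)\<bar> \<le> (INF m::int. \<bar>x - real_of_int m\<bar>)"
    by (rule cINF_greatest) (auto simp: round_diff_minimal)
qed

lemma dist_int_le: "dist_int x \<le> \<bar>x - of_int m\<bar>"
  by (simp add: dist_int_eq_round round_diff_minimal)

lemma dist_int_le_half: "dist_int x \<le> 1/2"
  using of_int_round_abs_le[of x] by (simp add: dist_int_eq_round abs_minus_commute)

lemma dist_int_le_dist_int_plus: "dist_int x \<le> dist_int y + \<bar>x - y\<bar>"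
proof -
  have "dist_int x \<le> \<bar>x - of_int (round y)\<bar>" by (rule dist_int_le)
  also have "\<dots> \<le> \<bar>y - of_int (round y)\<bar> + \<bar>x - y\<bar>" by simp
  finally show ?thesis by (simp add: dist_int_eq_round)
qed

lemma dist_int_add_of_int: "dist_int (x + of_int k) = dist_int x"
proof (rule antisym)
  have "dist_int (x + of_int k) \<le> \<bar>x + of_int k - of_int (round x + k)\<bar>" by (rule dist_int_le)
  then show "dist_int (x + of_int k) \<le> dist_int x" by (simp add: dist_int_eq_round)
  have "dist_int x \<le> \<bar>x - of_int (round (x + of_int k) - k)\<bar>" by (rule dist_int_le)
  then show "dist_int x \<le> dist_int (x + of_int k)" by (simp add: dist_int_eq_round)
qed

lemma dist_int_of_int [simp]: "dist_int (of_int k) = 0"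
  by (simp add: dist_int_eq_round)

lemma dist_int_of_int_add_half: "dist_int (of_int k + 1/2) = 1/2"
proof -
  have "\<bar>of_int k + 1/2 - of_int m\<bar> \<ge> (1/2::real)" for m :: int
    by (cases "m \<le> k") auto
  then have "dist_int (of_int k + 1/2) \<ge> 1/2" by (simp add: dist_int_eq_round)
  with dist_int_le_half[of "of_int k + 1/2"] show ?thesis by linarith
qed

lemma dist_int_eq_imp_mult_in_Ints:
  assumes "dist_int x = real a / real q" "q > 0"
  shows "x * real q \<in> \<int>"
proof -
  have "\<bar>x * real q - of_int (round x) * real q\<bar> = dist_int x * real q"
    by (simp add: dist_int_eq_round abs_mult flip: left_diff_distrib)
  also have "\<dots> = real a" using assms by simp
  finally have "\<bar>x * real q - of_int (round x) * real q\<bar> = real a" .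
  then have "x * real q = of_int (round x * int q + int a) \<or> x * real q = of_int (round x * int q - int a)"
    by (auto simp: abs_if split: if_splits)
  then show ?thesis by (metis Ints_of_int)
qed

definition loneliness :: "nat \<Rightarrow> (nat \<Rightarrow> nat) \<Rightarrow> real \<Rightarrow> real" where
  "loneliness k v t = (MIN i\<in>{1..k}. dist_int (t * real (v i)))"

lemma maxlone_eq_SUP_loneliness: "maxlone k v = (SUP t. loneliness k v t)"
  unfolding maxlone_def loneliness_def ..

lemma loneliness_le: "i \<in> {1..k} \<Longrightarrow> loneliness k v t \<le> dist_int (t * real (v i))"
  unfolding loneliness_def by (rule Min_le) auto

lemma loneliness_attained:
  assumes "k \<ge> 1"
  obtains i where "i \<in> {1..k}" "loneliness k v t = dist_int (t * real (v i))"
proof -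
  have "loneliness k v t \<in> (\<lambda>i. dist_int (t * real (v i))) ` {1..k}"
    unfolding loneliness_def using assms by (intro Min_in) auto
  with that show ?thesis by blast
qed

lemma loneliness_le_half: "k \<ge> 1 \<Longrightarrow> loneliness k v t \<le> 1/2"
  using loneliness_le[of 1 k v t] dist_int_le_half[of "t * real (v 1)"] by auto

lemma loneliness_le_maxlone: "k \<ge> 1 \<Longrightarrow> loneliness k v t \<le> maxlone k v"
  unfolding maxlone_eq_SUP_loneliness
  by (rule cSUP_upper) (auto intro!: bdd_aboveI2[of _ _ "1/2"] loneliness_le_half)

lemma loneliness_le_loneliness_plus:
  assumes "k \<ge> 1"
  shows "loneliness k v t \<le> loneliness k v t' + (\<Sum>i\<in>{1..k}. real (v i)) * \<bar>t - t'\<bar>"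
proof -
  obtain i where i: "i \<in> {1..k}" "loneliness k v t' = dist_int (t' * real (v i))"
    using loneliness_attained[OF assms] by blast
  have "real (v i) * \<bar>t - t'\<bar> \<le> (\<Sum>i\<in>{1..k}. real (v i)) * \<bar>t - t'\<bar>"
    using i(1) by (intro mult_right_mono member_le_sum) auto
  moreover have "\<bar>t * real (v i) - t' * real (v i)\<bar> = real (v i) * \<bar>t - t'\<bar>"
    by (simp add: left_diff_distrib[symmetric] abs_mult)
  moreover note loneliness_le[OF i(1), of v t]
    and dist_int_le_dist_int_plus[of "t * real (v i)" "t' * real (v i)"]
  ultimately show ?thesis using i(2) by linarith
qed

lemma lipschitz_on_loneliness:
  assumes "k \<ge> 1"
  shows "(\<Sum>i\<in>{1..k}. real (v i))-lipschitz_on S (loneliness k v)"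
proof (rule lipschitz_onI)
  fix x y
  show "dist (loneliness k v x) (loneliness k v y) \<le> (\<Sum>i\<in>{1..k}. real (v i)) * dist x y"
    using loneliness_le_loneliness_plus[OF assms, of v x y]
      loneliness_le_loneliness_plus[OF assms, of v y x]
    by (simp add: dist_real_def abs_le_iff abs_minus_commute)
qed (simp add: sum_nonneg)

lemma loneliness_add_of_int: "loneliness k v (t + of_int m) = loneliness k v t"
proof -
  have "dist_int ((t + of_int m) * real (v i)) = dist_int (t * real (v i))" for i
  proof -
    have "(t + of_int m) * real (v i) = t * real (v i) + of_int (m * int (v i))"
      by (simp add: algebra_simps)
    then show ?thesis by (simp only: dist_int_add_of_int)
  qed
  then show ?thesis unfolding loneliness_def by simp
qed

lemma maxlone_attained:
  assumes "k \<ge> 1"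
  obtains t where "loneliness k v t = maxlone k v"
proof -
  have "continuous_on {0..1} (loneliness k v)"
    using lipschitz_on_loneliness[OF assms] by (rule lipschitz_on_continuous_on)
  then obtain x where x: "\<forall>y\<in>{0..1}. loneliness k v y \<le> loneliness k v x"
    using continuous_attains_sup[of "{0..1::real}" "loneliness k v"] by auto
  have "loneliness k v t \<le> loneliness k v x" for t
  proof -
    have "loneliness k v t = loneliness k v (frac t + of_int \<lfloor>t\<rfloor>)" by (simp add: frac_def)
    also have "\<dots> = loneliness k v (frac t)" by (rule loneliness_add_of_int)
    also have "\<dots> \<le> loneliness k v x" using x frac_lt_1[of t] frac_ge_0[of t] by auto
    finally show ?thesis .
  qed
  then have "maxlone k v \<le> loneliness k v x"
    unfolding maxlone_eq_SUP_loneliness by (intro cSUP_least) auto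
  with loneliness_le_maxlone[OF assms, of v x] that show ?thesis by simp
qed

lemma loneliness_fun_upd_Suc:
  assumes "k \<ge> 1"
  shows "loneliness (Suc k) (v(Suc k := c)) t = min (loneliness k v t) (dist_int (t * real c))"
proof -
  have "{1..Suc k} = insert (Suc k) {1..k}" using assms by auto
  moreover have "(MIN i\<in>{1..k}. dist_int (t * real ((v(Suc k := c)) i))) = loneliness k v t"
    unfolding loneliness_def by (intro arg_cong[where f = Min] image_cong) auto
  ultimately show ?thesis
    using assms unfolding loneliness_def by (simp add: Min.insert_remove min.commute)
qed

lemma maxlone_fun_upd_Suc_repeat:
  assumes "j \<in> {1..k}"
  shows "maxlone (Suc k) (v(Suc k := v j)) = maxlone k v"
proof -
  have "loneliness (Suc k) (v(Suc k := v j)) t = loneliness k v t" for t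
    using assms loneliness_le[OF assms, of v t] by (simp add: loneliness_fun_upd_Suc)
  then show ?thesis unfolding maxlone_eq_SUP_loneliness by simp
qed

lemma maxlone_fun_upd_Suc_less:
  assumes "k \<ge> 1" and \<delta>: "maxlone k v = real a / real q" "a > 0" "q > 0"
    and dvd: "\<forall>i\<in>{1..k}. q * v i dvd K"
  shows "maxlone (Suc k) (v(Suc k := K)) < maxlone k v"
proof -
  have "maxlone k v > 0" using \<delta> by simp
  obtain t where t: "loneliness (Suc k) (v(Suc k := K)) t = maxlone (Suc k) (v(Suc k := K))"
    using maxlone_attained[of "Suc k"] by auto
  have "loneliness (Suc k) (v(Suc k := K)) t < maxlone k v"
  proof (cases "loneliness k v t < maxlone k v")
    case True
    then show ?thesis using \<open>k \<ge> 1\<close> by (simp add: loneliness_fun_upd_Suc)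
  next
    case False
    then have max: "loneliness k v t = maxlone k v"
      using loneliness_le_maxlone[OF \<open>k \<ge> 1\<close>, of v t] by simp
    obtain i where i: "i \<in> {1..k}" "loneliness k v t = dist_int (t * real (v i))"
      using loneliness_attained[OF \<open>k \<ge> 1\<close>] by blast
    have "t * real (v i) * real q \<in> \<int>"
      using max i(2) \<delta> by (intro dist_int_eq_imp_mult_in_Ints) simp_all
    then obtain j where j: "t * real (v i) * real q = of_int j" by (elim Ints_cases)
    obtain c where "K = q * v i * c" using dvd i(1) by blast
    then have "t * real K = of_int (j * int c)" using j by (simp add: algebra_simps)
    then have "dist_int (t * real K) = 0" by (simp only: dist_int_of_int)
    then show ?thesis
      using \<open>k \<ge> 1\<close> \<open>maxlone k v > 0\<close> by (simp add: loneliness_fun_upd_Suc)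
  qed
  with t show ?thesis by simp
qed

lemma maxlone_fun_upd_Suc_ge:
  assumes "k \<ge> 1" "K > 0"
  shows "maxlone k v - (\<Sum>i\<in>{1..k}. real (v i)) / real K \<le> maxlone (Suc k) (v(Suc k := K))"
proof -
  define W where "W = (\<Sum>i\<in>{1..k}. real (v i))"
  obtain t0 where t0: "loneliness k v t0 = maxlone k v"
    using maxlone_attained[OF assms(1)] by blast
  \<comment> \<open>the nearby time at which the new runner sits at distance \<open>1/2\<close>\<close>
  define t where "t = (of_int \<lfloor>t0 * real K\<rfloor> + 1/2) / real K"
  have tK: "t * real K = of_int \<lfloor>t0 * real K\<rfloor> + 1/2"
    unfolding t_def using assms(2) by simp
  have "\<bar>t0 - t\<bar> * real K = \<bar>t * real K - t0 * real K\<bar>"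
    by (simp add: abs_mult abs_minus_commute flip: left_diff_distrib)
  also have "\<dots> \<le> 1"
    unfolding tK using floor_correct[of "t0 * real K"] by linarith
  finally have "\<bar>t0 - t\<bar> \<le> 1 / real K"
    using assms(2) by (simp add: pos_le_divide_eq)
  moreover have "W \<ge> 0" unfolding W_def by (simp add: sum_nonneg)
  ultimately have "W * \<bar>t0 - t\<bar> \<le> W / real K"
    using mult_left_mono by fastforce
  moreover have "loneliness k v t0 \<le> loneliness k v t + W * \<bar>t0 - t\<bar>"
    unfolding W_def by (rule loneliness_le_loneliness_plus[OF assms(1)])
  moreover have "maxlone k v \<le> 1/2"
    using t0 loneliness_le_half[OF assms(1), of v t0] by simp
  moreover have "W / real K \<ge> 0" using \<open>W \<ge> 0\<close> by simp
  ultimately have "maxlone k v - W / real K \<le> loneliness (Suc k) (v(Suc k := K)) t"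
    using t0 assms(1) by (simp add: loneliness_fun_upd_Suc tK dist_int_of_int_add_half)
  also have "\<dots> \<le> maxlone (Suc k) (v(Suc k := K))" by (rule loneliness_le_maxlone) simp
  finally show ?thesis unfolding W_def .
qed

lemma exists_speed_slightly_decreasing_maxlone:
  assumes "k \<ge> 1" "\<forall>i\<in>{1..k}. v i > 0"
    and "maxlone k v = real a / real q" "a > 0" "q > 0" and "\<epsilon> > 0"
  obtains K where "K > 0"
    "maxlone k v - \<epsilon> < maxlone (Suc k) (v(Suc k := K))"
    "maxlone (Suc k) (v(Suc k := K)) < maxlone k v"
proof -
  define W where "W = (\<Sum>i\<in>{1..k}. real (v i))"
  define N where "N = nat \<lceil>W / \<epsilon>\<rceil> + 1"
  define P where "P = (\<Prod>i\<in>{1..k}. v i)"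
  define K where "K = q * P * N"
  have "P > 0" unfolding P_def using assms(2) by (intro prod_pos) auto
  then have "1 \<le> q * P" using \<open>q > 0\<close> by simp
  then have "N \<le> K" unfolding K_def using mult_le_mono1[of 1 "q * P" N] by simp
  then have "K > 0" unfolding N_def by simp
  have "W / \<epsilon> < real N" unfolding N_def by linarith
  also have "\<dots> \<le> real K" using \<open>N \<le> K\<close> by simp
  finally have "W / real K < \<epsilon>"
    using \<open>\<epsilon> > 0\<close> \<open>K > 0\<close> by (simp add: field_simps)
  moreover have "maxlone k v - W / real K \<le> maxlone (Suc k) (v(Suc k := K))"
    unfolding W_def using assms(1) \<open>K > 0\<close> by (rule maxlone_fun_upd_Suc_ge)
  moreover have "q * v i dvd K" if "i \<in> {1..k}" for i
    unfolding K_def P_def using that by (simp add: dvd_prodI mult_dvd_mono)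
  then have "maxlone (Suc k) (v(Suc k := K)) < maxlone k v"
    using maxlone_fun_upd_Suc_less[OF assms(1) assms(3-5)] by blast
  ultimately show ?thesis using that \<open>K > 0\<close> by simp
qed

lemma s_div_ns_plus_1_gap:
  fixes n s s' :: nat
  assumes less: "real s / (real n * real s + 1) < real s' / (real n * real s' + 1)"
  shows "real s' / (real n * real s' + 1) - real s / (real n * real s + 1)
    \<ge> 1 / (real n * real s' + 1)\<^sup>2"
proof -
  have pos: "real n * real s + 1 > 0" "real n * real s' + 1 > 0" by (auto intro!: add_nonneg_pos)
  have diff: "real s' / (real n * real s' + 1) - real s / (real n * real s + 1)
    = (real s' - real s) / ((real n * real s' + 1) * (real n * real s + 1))"
    using pos by (simp add: field_simps)
  then have "(real s' - real s) / ((real n * real s' + 1) * (real n * real s + 1)) > 0"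
    using less by linarith
  then have "s < s'" using mult_pos_pos[OF pos(2,1)] by (simp add: zero_less_divide_iff)
  then have "real n * real s + 1 \<le> real n * real s' + 1" by (simp add: mult_left_mono)
  then have "1 / (real n * real s' + 1)\<^sup>2 \<le> 1 / ((real n * real s' + 1) * (real n * real s + 1))"
    using pos by (simp add: power2_eq_square frac_le mult_left_mono)
  also have "\<dots> \<le> (real s' - real s) / ((real n * real s' + 1) * (real n * real s + 1))"
    using \<open>s < s'\<close> pos by (intro divide_right_mono) auto
  finally show ?thesis using diff by simp
qed

lemma exists_speed_maxlone_not_s_div_ns_plus_1:
  fixes n s0 :: nat
  assumes "k \<ge> 1" "\<forall>i\<in>{1..k}. v i > 0"
    and "maxlone k v = real s0 / (real n * real s0 + 1)" "s0 \<ge> 1"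
  obtains K where "K > 0" "maxlone (Suc k) (v(Suc k := K)) < maxlone k v"
    "\<forall>s::nat. maxlone (Suc k) (v(Suc k := K)) \<noteq> real s / (real n * real s + 1)"
proof -
  define q where "q = n * s0 + 1"
  have q: "real q = real n * real s0 + 1" unfolding q_def by simp
  have "q > 0" unfolding q_def by simp
  have "maxlone k v = real s0 / real q" using assms(3) by (simp only: q)
  moreover have "s0 > 0" using assms(4) by simp
  moreover have "1 / (real q)\<^sup>2 > 0" using \<open>q > 0\<close> by simp
  ultimately obtain K where "K > 0"
    and close: "maxlone k v - 1 / (real q)\<^sup>2 < maxlone (Suc k) (v(Suc k := K))"
    and below: "maxlone (Suc k) (v(Suc k := K)) < maxlone k v"
    using exists_speed_slightly_decreasing_maxlone[OF assms(1,2) _ _ \<open>q > 0\<close>] by blast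
  have not_value: "maxlone (Suc k) (v(Suc k := K)) \<noteq> real s / (real n * real s + 1)" for s :: nat
  proof
    assume eq: "maxlone (Suc k) (v(Suc k := K)) = real s / (real n * real s + 1)"
    have "maxlone k v - maxlone (Suc k) (v(Suc k := K)) \<ge> 1 / (real q)\<^sup>2"
      using s_div_ns_plus_1_gap[of s n s0] below unfolding eq assms(3) q by linarith
    with close show False by linarith
  qed
  with that \<open>K > 0\<close> below show ?thesis by blast
qed

theorem proposition3p3:
  fixes n :: nat
  assumes n2: "n \<ge> 2"
    and hyp: "\<And>v :: nat \<Rightarrow> nat. (\<forall>i\<in>{1..n}. v i > 0) \<Longrightarrow>
          (\<exists>s::nat. s \<ge> 1 \<and> maxlone n v = real s / (real n * real s + 1)) \<or> maxlone n v \<ge> 1 / real n"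
  shows "\<forall>w :: nat \<Rightarrow> nat. (\<forall>i\<in>{1..n-1}. w i > 0) \<longrightarrow> maxlone (n - 1) w \<ge> 1 / real n"
proof (intro allI impI)
  fix w :: "nat \<Rightarrow> nat"
  assume wpos: "\<forall>i\<in>{1..n-1}. w i > 0"
  obtain k where n: "n = Suc k" and "k \<ge> 1" using n2 by (cases n) auto
  have wpos': "\<forall>i\<in>{1..k}. w i > 0" using wpos n by simp
  have hyp_upd: "(\<exists>s::nat. s \<ge> 1 \<and> maxlone (Suc k) (w(Suc k := c)) = real s / (real n * real s + 1))
      \<or> maxlone (Suc k) (w(Suc k := c)) \<ge> 1 / real n" if "c > 0" for c
    using hyp[of "w(Suc k := c)"] wpos' that n by auto
  show "maxlone (n - 1) w \<ge> 1 / real n"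
  proof (rule ccontr)
    assume "\<not> ?thesis"
    then have small: "maxlone k w < 1 / real n" using n by simp
    have "w 1 > 0" using wpos' \<open>k \<ge> 1\<close> by simp
    moreover have "maxlone (Suc k) (w(Suc k := w 1)) = maxlone k w"
      using \<open>k \<ge> 1\<close> by (intro maxlone_fun_upd_Suc_repeat) simp
    ultimately obtain s0 :: nat
      where "maxlone k w = real s0 / (real n * real s0 + 1)" "s0 \<ge> 1"
      using hyp_upd[of "w 1"] small by auto
    then obtain K where "K > 0" and below: "maxlone (Suc k) (w(Suc k := K)) < maxlone k w"
      and not_value: "\<forall>s::nat. maxlone (Suc k) (w(Suc k := K)) \<noteq> real s / (real n * real s + 1)"
      by (rule exists_speed_maxlone_not_s_div_ns_plus_1[OF \<open>k \<ge> 1\<close> wpos'])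
    from hyp_upd[OF \<open>K > 0\<close>] show False
      using not_value below small by auto
  qed
qed

end
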